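(* Let $\Sigma$ be an alphabet and $n\geq 1$. A function $g\colon\mathcal{T}(\Sigma)^n\to\mathcal{T}(\Sigma)$ is WCP if and only if it satisfies the following condition (GCP): for all $a_1,\ldots,a_n\in\Sigma$, all $i\in\{1,\ldots,n\}$ and all $b_i\in\Sigma$, $$\sigma_{a_i}^{b_i}(g(a_1,\ldots,a_n))=\sigma_{a_i}^{b_i}(g(a_1,\ldots,a_{i-1},b_i,a_{i+1},\ldots,a_n)).$$
   Context: Let $\Sigma$ be an alphabet not containing $0,1$. A binary tree over $\Sigma$ is a finite set $t \subseteq \{0,1\}^*\Sigma$ such that for any $ua, vb \in t$ with $ua \neq vb$, $u$ is not a prefix of $v$ and $v$ is not a prefix of $u$; $\mathcal{T}(\Sigma)$ is the set of such trees, $\mathbf 0=\emptyset$, each letter $a$ is identified with $\{a\}$, and $t\star t' = 0.t\cup 1.t'$. Every map $h\colon\Sigma\to\mathcal{T}(\Sigma)$ extends uniquely to an endomorphism of $\langle\mathcal{T}(\Sigma),\star\rangle$, still denoted $h$. For $a\in\Sigma$ and $\tau\in\mathcal{T}(\Sigma)$, the grafting $\sigma_a^\tau$ is the endomorphism with $\sigma_a^\tau(a)=\tau$ and $\sigma_a^\tau(b)=b$ for $b\neq a$. A function $g\colon\mathcal{T}(\Sigma)^n\to\mathcal{T}(\Sigma)$ is WCP if for every idempotent mapping $h\colon\Sigma\to\Sigma$ and all $\vec u,\vec v\in\Sigma^n$, $h(\vec u)=h(\vec v)$ implies $h(g(\vec u))=h(g(\vec v))$, where $h(\langle u_1,\ldots,u_n\rangle)=\langle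 h(u_1),\ldots,h(u_n)\rangle$. *)

theory Defs
  imports Main
begin

text \<open>Letters of the alphabet Sigma are the elements of a type 'a; the path symbols 0,1
are encoded by False/True, so Sigma is automatically disjoint from {0,1}.
An element u a of {0,1}^* Sigma is the pair (u, a).\<close>

type_synonym 'a tree = "(bool list \<times> 'a) set"

definition is_tree :: "'a tree \<Rightarrow> bool" where
  "is_tree t \<longleftrightarrow> finite t \<and>
     (\<forall>u a v b. (u, a) \<in> t \<longrightarrow> (v, b) \<in> t \<longrightarrow> (u, a) \<noteq> (v, b) \<longrightarrow>
        \<not> (\<exists>w. v = u @ w) \<and> \<not> (\<exists>w. u = v @ w))"

definition trees :: "'a tree set" where
  "trees = {t. is_tree t}"

definition zero_tree :: "'a tree" where
  "zero_tree = {}"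

text \<open>A letter a is identified with the tree {a}.\<close>
definition leaf :: "'a \<Rightarrow> 'a tree" where
  "leaf a = {([], a)}"

definition star :: "'a tree \<Rightarrow> 'a tree \<Rightarrow> 'a tree" where
  "star t t' = {(False # u, a) | u a. (u, a) \<in> t} \<union> {(True # u, a) | u a. (u, a) \<in> t'}"

text \<open>The (unique) endomorphism of (T(Sigma), star) extending h : Sigma -> T(Sigma):
each leaf u a is replaced by the tree h a grafted at position u.\<close>
definition hom_ext :: "('a \<Rightarrow> 'a tree) \<Rightarrow> 'a tree \<Rightarrow> 'a tree" where
  "hom_ext h t = {(u @ v, b) | u a v b. (u, a) \<in> t \<and> (v, b) \<in> h a}"

definition graft :: "'a \<Rightarrow> 'a tree \<Rightarrow> 'a tree \<Rightarrow> 'a tree" where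
  "graft a \<tau> = hom_ext (\<lambda>c. if c = a then \<tau> else leaf c)"

definition letter_map :: "('a \<Rightarrow> 'a) \<Rightarrow> 'a tree \<Rightarrow> 'a tree" where
  "letter_map h = hom_ext (leaf \<circ> h)"

text \<open>An n-ary function on trees is modelled as g on lists of trees, used only on lists of
length n.\<close>
definition WCP :: "nat \<Rightarrow> ('a tree list \<Rightarrow> 'a tree) \<Rightarrow> bool" where
  "WCP n g \<longleftrightarrow>
     (\<forall>h :: 'a \<Rightarrow> 'a. h \<circ> h = h \<longrightarrow>
        (\<forall>us vs. length us = n \<longrightarrow> length vs = n \<longrightarrow> map h us = map h vs \<longrightarrow>
           letter_map h (g (map leaf us)) = letter_map h (g (map leaf vs))))"

definition GCP :: "nat \<Rightarrow> ('a tree list \<Rightarrow> 'a tree) \<Rightarrow> bool" where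
  "GCP n g \<longleftrightarrow>
     (\<forall>as. length as = n \<longrightarrow> (\<forall>i < n. \<forall>b.
        graft (as ! i) (leaf b) (g (map leaf as)) =
        graft (as ! i) (leaf b) (g (map leaf (as[i := b])))))"

end

theory Submission
  imports Defs
begin

text \<open>On letters, a grafting of a letter by a letter is the renaming id(a := b), an idempotent
map identifying a with b; so WCP yields GCP directly. Conversely, an idempotent h fixes every
letter in its image, hence h = h \<circ> id(a := h a) for every letter a. Applying h after GCP
therefore allows replacing the arguments by their h-images one position at a time without
changing h(g(...)); two argument lists with the same h-image thus give the same value.\<close>

lemma letter_map_eq_image: "letter_map f t = apsnd f ` t"
  unfolding letter_map_def hom_ext_def leaf_def by force

lemma letter_map_comp: "letter_map f (letter_map g t) = letter_map (f \<circ> g) t"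
  unfolding letter_map_eq_image image_image by (simp add: apsnd_def map_prod_def split_def)

lemma graft_leaf: "graft a (leaf b) = letter_map (id(a := b))"
proof -
  have "(\<lambda>c. if c = a then leaf b else leaf c) = leaf \<circ> id(a := b)"
    by (auto simp: fun_eq_iff)
  then show ?thesis
    unfolding graft_def letter_map_def by simp
qed

lemma map_take_drop_update:
  assumes "k < length xs"
  shows "(map f (take k xs) @ drop k xs)[k := f (xs ! k)] = map f (take (Suc k) xs) @ drop (Suc k) xs"
  using assms
  by (simp add: upd_conv_take_nth_drop take_Suc_conv_app_nth Cons_nth_drop_Suc min_def)

lemma list_update_invariant_imp_map_invariant:
  assumes update: "\<And>xs i. length xs = n \<Longrightarrow> i < n \<Longrightarrow> F (xs[i := f (xs ! i)]) = F xs"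
    and "length xs = n"
  shows "F (map f xs) = F xs"
proof -
  have "F (map f (take k xs) @ drop k xs) = F xs" if "k \<le> n" for k
    using that
  proof (induction k)
    case 0
    then show ?case by simp
  next
    case (Suc k)
    let ?ys = "map f (take k xs) @ drop k xs"
    have k: "k < length xs" using Suc.prems \<open>length xs = n\<close> by simp
    have "?ys ! k = xs ! k" using k by (simp add: nth_append)
    then have "F (map f (take (Suc k) xs) @ drop (Suc k) xs) = F (?ys[k := f (?ys ! k)])"
      by (simp add: map_take_drop_update[OF k])
    also have "\<dots> = F ?ys"
      using update k \<open>length xs = n\<close> by simp
    finally show ?case using Suc by simp
  qed
  from this[of n] show ?thesis using \<open>length xs = n\<close> by simp
qed

lemma WCP_imp_GCP:
  assumes "WCP n g"
  shows "GCP n g"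
  unfolding GCP_def
proof (intro allI impI)
  fix as :: "'a list" and i b
  assume "length as = n" and "i < n"
  let ?f = "id(as ! i := b)"
  have idem: "?f \<circ> ?f = ?f" by (auto simp: fun_eq_iff)
  have "map ?f (as[i := b]) = (map ?f as)[i := map ?f as ! i]"
    using \<open>i < n\<close> \<open>length as = n\<close> by (simp add: map_update)
  also have "\<dots> = map ?f as"
    by (rule list_update_id)
  finally have "map ?f (as[i := b]) = map ?f as" .
  then have "letter_map ?f (g (map leaf as)) = letter_map ?f (g (map leaf (as[i := b])))"
    using assms \<open>length as = n\<close> unfolding WCP_def by (metis idem length_list_update)
  then show "graft (as ! i) (leaf b) (g (map leaf as)) =
      graft (as ! i) (leaf b) (g (map leaf (as[i := b])))"
    unfolding graft_leaf .
qed

lemma GCP_imp_WCP: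
  assumes "GCP n g"
  shows "WCP n g"
  unfolding WCP_def
proof (intro allI impI)
  fix h :: "'a \<Rightarrow> 'a" and us vs :: "'a list"
  assume idem: "h \<circ> h = h" and "length us = n" and "length vs = n"
    and "map h us = map h vs"
  let ?F = "\<lambda>xs. letter_map h (g (map leaf xs))"
  have update: "?F (xs[i := h (xs ! i)]) = ?F xs" if "length xs = n" and "i < n" for xs i
  proof -
    have "graft (xs ! i) (leaf (h (xs ! i))) (g (map leaf xs)) =
        graft (xs ! i) (leaf (h (xs ! i))) (g (map leaf (xs[i := h (xs ! i)])))"
      using assms that unfolding GCP_def by blast
    then have "letter_map (h \<circ> id(xs ! i := h (xs ! i))) (g (map leaf xs)) =
        letter_map (h \<circ> id(xs ! i := h (xs ! i))) (g (map leaf (xs[i := h (xs ! i)])))"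
      unfolding graft_leaf by (simp flip: letter_map_comp)
    moreover have "h \<circ> id(xs ! i := h (xs ! i)) = h"
      using idem by (auto simp: fun_eq_iff dest: fun_cong)
    ultimately show ?thesis by simp
  qed
  have "?F us = ?F (map h us)"
    using list_update_invariant_imp_map_invariant[OF update \<open>length us = n\<close>] by simp
  also have "\<dots> = ?F (map h vs)" using \<open>map h us = map h vs\<close> by simp
  also have "\<dots> = ?F vs"
    using list_update_invariant_imp_map_invariant[OF update \<open>length vs = n\<close>] by simp
  finally show "?F us = ?F vs" .
qed

theorem mainTheorem7:
  fixes n :: nat and g :: "'a tree list \<Rightarrow> 'a tree"
  assumes "n \<ge> 1"
    and "\<forall>ts. length ts = n \<longrightarrow> set ts \<subseteq> trees \<longrightarrow> g ts \<in> trees"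
  shows "WCP n g \<longleftrightarrow> GCP n g"
  using WCP_imp_GCP GCP_imp_WCP by blast

end
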